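(* Let $d\ge3$. Suppose that $\det H(X,Y)\ne0$ for every generic pair $(X,Y)$ of matrices in $M_d(\mathbb{C})$. Then $H(X,Y)$ is positive semidefinite for all $X,Y\in M_d(\mathbb{C})$. Here $H(X,Y)$ is the hermitian matrix of order $2d^2$ given by $H=H_1-\tfrac12(H_2+H_3)+\tfrac14H_4$ with $$H_1=\begin{bmatrix}\|X\|^2&\operatorname{tr}(X^\dagger Y)\\ \operatorname{tr}(Y^\dagger X)&\|Y\|^2\end{bmatrix}\otimes I_{d^2},\qquad H_2=\begin{bmatrix}X^\dagger X&X^\dagger Y\\ Y^\dagger X&Y^\dagger Y\end{bmatrix}\otimes I_d,$$ $$H_3=\begin{bmatrix}I_d\otimes X^*X^T&I_d\otimes X^*Y^T\\ I_d\otimes Y^*X^T&I_d\otimes Y^*Y^T\end{bmatrix},\qquad H_4=\begin{bmatrix}\tilde X^*\tilde X^T&\tilde X^*\tilde Y^T\\ \tilde Y^*\tilde X^T&\tilde Y^*\tilde Y^T\end{bmatrix}.$$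
   Context: A pair $(X,Y)$ of matrices in $M_d(\mathbb{C})$ is generic if $X$ and $Y$ are linearly independent and some linear combination of $X$ and $Y$ is nonsingular. $Z^*$ is the entrywise complex conjugate, $Z^T$ the transpose, $Z^\dagger$ the conjugate transpose, $\|Z\|^2=\operatorname{tr}(Z^\dagger Z)$, $I_m$ the identity matrix of order $m$, and $A\otimes B=[a_{ij}B]$ for $A=[a_{ij}]$. For a matrix $Z$, $\tilde Z$ is the column vector obtained by stacking the columns of $Z$ one below the other, starting with the first. *)

theory Defs
  imports "Jordan_Normal_Form.Determinant" Complex_Main
begin

definition kron :: "complex mat \<Rightarrow> complex mat \<Rightarrow> complex mat" where
  "kron A B = mat (dim_row A * dim_row B) (dim_col A * dim_col B)
     (\<lambda>(i,j). A $$ (i div dim_row B, j div dim_col B) * B $$ (i mod dim_row B, j mod dim_col B))"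

text \<open>Entrywise conjugate Z^*, and conjugate transpose Z^dagger.\<close>
definition conj_mat :: "complex mat \<Rightarrow> complex mat" where
  "conj_mat Z = map_mat cnj Z"

definition dag :: "complex mat \<Rightarrow> complex mat" where
  "dag Z = conj_mat (transpose_mat Z)"

definition mtrace :: "complex mat \<Rightarrow> complex" where
  "mtrace A = (\<Sum>i<dim_row A. A $$ (i,i))"

definition fnorm2 :: "complex mat \<Rightarrow> complex" where
  "fnorm2 Z = mtrace (dag Z * Z)"

text \<open>Column stacking: tilde Z as a (rows*cols) x 1 column matrix, columns stacked starting with the first.\<close>
definition vecm :: "complex mat \<Rightarrow> complex mat" where
  "vecm Z = mat (dim_row Z * dim_col Z) 1 (\<lambda>(k,_). Z $$ (k mod dim_row Z, k div dim_row Z))"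

definition mat2 :: "complex \<Rightarrow> complex \<Rightarrow> complex \<Rightarrow> complex \<Rightarrow> complex mat" where
  "mat2 a b c e = mat 2 2 (\<lambda>(i,j). if i = 0 then (if j = 0 then a else b) else (if j = 0 then c else e))"

definition H1 :: "nat \<Rightarrow> complex mat \<Rightarrow> complex mat \<Rightarrow> complex mat" where
  "H1 d X Y = kron (mat2 (fnorm2 X) (mtrace (dag X * Y)) (mtrace (dag Y * X)) (fnorm2 Y)) (1\<^sub>m (d*d))"

definition H2 :: "nat \<Rightarrow> complex mat \<Rightarrow> complex mat \<Rightarrow> complex mat" where
  "H2 d X Y = kron (four_block_mat (dag X * X) (dag X * Y) (dag Y * X) (dag Y * Y)) (1\<^sub>m d)"

definition H3 :: "nat \<Rightarrow> complex mat \<Rightarrow> complex mat \<Rightarrow> complex mat" where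
  "H3 d X Y = four_block_mat
     (kron (1\<^sub>m d) (conj_mat X * transpose_mat X)) (kron (1\<^sub>m d) (conj_mat X * transpose_mat Y))
     (kron (1\<^sub>m d) (conj_mat Y * transpose_mat X)) (kron (1\<^sub>m d) (conj_mat Y * transpose_mat Y))"

definition H4 :: "complex mat \<Rightarrow> complex mat \<Rightarrow> complex mat" where
  "H4 X Y = four_block_mat
     (conj_mat (vecm X) * transpose_mat (vecm X)) (conj_mat (vecm X) * transpose_mat (vecm Y))
     (conj_mat (vecm Y) * transpose_mat (vecm X)) (conj_mat (vecm Y) * transpose_mat (vecm Y))"

definition HH :: "nat \<Rightarrow> complex mat \<Rightarrow> complex mat \<Rightarrow> complex mat" where
  "HH d X Y = H1 d X Y - (1/2 :: complex) \<cdot>\<^sub>m (H2 d X Y + H3 d X Y) + (1/4 :: complex) \<cdot>\<^sub>m H4 X Y"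

definition generic_pair :: "complex mat \<Rightarrow> complex mat \<Rightarrow> bool" where
  "generic_pair X Y \<longleftrightarrow>
     (\<forall>a b :: complex. a \<cdot>\<^sub>m X + b \<cdot>\<^sub>m Y = 0\<^sub>m (dim_row X) (dim_col X) \<longrightarrow> a = 0 \<and> b = 0) \<and>
     (\<exists>a b :: complex. det (a \<cdot>\<^sub>m X + b \<cdot>\<^sub>m Y) \<noteq> 0)"

definition psd :: "complex mat \<Rightarrow> bool" where
  "psd H \<longleftrightarrow> H \<in> carrier_mat (dim_row H) (dim_row H) \<and> dag H = H \<and>
     (\<forall>v \<in> carrier_vec (dim_row H).
        let q = (\<Sum>i<dim_row H. cnj (v $ i) * (H *\<^sub>v v) $ i) in Im q = 0 \<and> Re q \<ge> 0)"

end

theory Submission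
  imports Defs "Jordan_Normal_Form.Char_Poly" "HOL-Analysis.Function_Topology"
    "HOL-Analysis.Topology_Euclidean_Space"
begin

text \<open>
  Connect an arbitrary pair \<open>(X, Y)\<close> to the base pair \<open>(I, E\<^sub>0\<^sub>0)\<close>, at which \<open>H\<close> is seen to be
  positive semidefinite by a direct computation, through the pencil
  \<open>w \<mapsto> ((1 - w) I + w X, (1 - w) E\<^sub>0\<^sub>0 + w Y)\<close>. The pair fails to be generic only for finitely
  many \<open>w\<close>, so a path from \<open>w = 0\<close> to \<open>w = 1\<close> can avoid those values before its endpoint. Along
  it, \<open>H\<close> is a continuous family of hermitian matrices which are nonsingular by hypothesis, so no
  eigenvalue can cross zero: positive semidefiniteness propagates from \<open>t = 0\<close> to \<open>t = 1\<close>.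
\<close>

lemma index_mult_mat_sum:
  assumes "A \<in> carrier_mat n m" "B \<in> carrier_mat m k" "i < n" "j < k"
  shows "(A * B) $$ (i,j) = (\<Sum>l<m. A $$ (i,l) * B $$ (l,j))"
  using assms by (auto simp: scalar_prod_def atLeast0LessThan intro!: sum.cong)

lemma dag_carrier_mat [simp]: "X \<in> carrier_mat n m \<Longrightarrow> dag X \<in> carrier_mat m n"
  by (auto simp: dag_def conj_mat_def)

lemma dim_dag [simp]: "dim_row (dag X) = dim_col X" "dim_col (dag X) = dim_row X"
  by (auto simp: dag_def conj_mat_def)

lemma index_dag [simp]:
  "X \<in> carrier_mat n m \<Longrightarrow> i < m \<Longrightarrow> j < n \<Longrightarrow> dag X $$ (i,j) = cnj (X $$ (j,i))"
  by (auto simp: dag_def conj_mat_def)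

lemma conj_mat_carrier_mat [simp]: "X \<in> carrier_mat n m \<Longrightarrow> conj_mat X \<in> carrier_mat n m"
  by (auto simp: conj_mat_def)

lemma dim_conj_mat [simp]: "dim_row (conj_mat X) = dim_row X" "dim_col (conj_mat X) = dim_col X"
  by (auto simp: conj_mat_def)

lemma index_conj_mat [simp]:
  "X \<in> carrier_mat n m \<Longrightarrow> i < n \<Longrightarrow> j < m \<Longrightarrow> conj_mat X $$ (i,j) = cnj (X $$ (i,j))"
  by (auto simp: conj_mat_def)

lemma kron_carrier_mat [simp]:
  "kron A B \<in> carrier_mat (dim_row A * dim_row B) (dim_col A * dim_col B)"
  by (simp add: kron_def)

lemma index_kron:
  "i < dim_row A * dim_row B \<Longrightarrow> j < dim_col A * dim_col B \<Longrightarrow>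
   kron A B $$ (i,j) = A $$ (i div dim_row B, j div dim_col B) * B $$ (i mod dim_row B, j mod dim_col B)"
  by (simp add: kron_def)

lemma mtrace_dag_mult:
  assumes "X \<in> carrier_mat d d" "Y \<in> carrier_mat d d"
  shows "mtrace (dag X * Y) = (\<Sum>i<d. \<Sum>k<d. cnj (X $$ (k,i)) * Y $$ (k,i))"
proof -
  have "dim_row (dag X * Y) = d" using assms by simp
  then show ?thesis using assms
  by (auto simp del: index_mult_mat simp: mtrace_def index_mult_mat_sum[of "dag X" d d Y d]
      intro!: sum.cong)
qed

lemma block_index_div_mod:
  fixes d p r :: nat
  assumes "r < d * d"
  shows "(p * (d * d) + r) div (d * d) = p" "(p * (d * d) + r) mod (d * d) = r"
    and "(p * (d * d) + r) div d = p * d + r div d" "(p * (d * d) + r) mod d = r mod d"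
proof -
  have "0 < d" using assms by (cases "d = 0") auto
  moreover have e: "p * (d * d) + r = r + (p * d) * d" by (simp add: mult.assoc)
  ultimately show "(p * (d * d) + r) div d = p * d + r div d" "(p * (d * d) + r) mod d = r mod d"
    unfolding e using div_mult_self1[of d r "p * d"] by simp_all
  have "p * (d * d) + r = r + p * (d * d)" by simp
  then show "(p * (d * d) + r) div (d * d) = p" "(p * (d * d) + r) mod (d * d) = r"
    using assms \<open>0 < d\<close> div_mult_self1[of "d * d" r p] by simp_all
qed

subsection \<open>The entries of \<open>H(X, Y)\<close>\<close>

definition sel :: "'a \<Rightarrow> 'a \<Rightarrow> nat \<Rightarrow> 'a" where
  "sel x y p = (if p = 0 then x else y)"

definition entries :: "complex mat \<Rightarrow> nat \<Rightarrow> nat \<Rightarrow> complex" where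
  "entries X a b = X $$ (a,b)"

text \<open>
  For entry functions \<open>x\<close>, \<open>y\<close> of \<open>X\<close>, \<open>Y\<close>, this is the entry \<open>(p d\<^sup>2 + r, q d\<^sup>2 + s)\<close> of
  \<open>H(X, Y)\<close>, the four summands coming from \<open>H\<^sub>1, \<dots>, H\<^sub>4\<close>; an index \<open>r < d\<^sup>2\<close> stands for the
  position \<open>(r mod d, r div d)\<close> of a \<open>d \<times> d\<close> matrix, as in column stacking.
\<close>
definition HH_coeff ::
  "nat \<Rightarrow> (nat \<Rightarrow> nat \<Rightarrow> complex) \<Rightarrow> (nat \<Rightarrow> nat \<Rightarrow> complex) \<Rightarrow> nat \<Rightarrow> nat \<Rightarrow> nat \<Rightarrow> nat \<Rightarrow> complex"
  where
  "HH_coeff d x y p q r s =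
     (if r = s then (\<Sum>i<d. \<Sum>k<d. cnj (sel x y p k i) * sel x y q k i) else 0)
   - 1/2 * ((if r mod d = s mod d
             then (\<Sum>k<d. cnj (sel x y p k (r div d)) * sel x y q k (s div d)) else 0)
          + (if r div d = s div d
             then (\<Sum>k<d. cnj (sel x y p (r mod d) k) * sel x y q (s mod d) k) else 0))
   + 1/4 * (cnj (sel x y p (r mod d) (r div d)) * sel x y q (s mod d) (s div d))"

definition HH_fun ::
  "nat \<Rightarrow> (nat \<Rightarrow> nat \<Rightarrow> complex) \<Rightarrow> (nat \<Rightarrow> nat \<Rightarrow> complex) \<Rightarrow> nat \<Rightarrow> nat \<Rightarrow> complex" where
  "HH_fun d x y i j = HH_coeff d x y (i div (d * d)) (j div (d * d)) (i mod (d * d)) (j mod (d * d))"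

lemma four_block_mat_index_sel:
  assumes "A \<in> carrier_mat n n" "B \<in> carrier_mat n n" "C \<in> carrier_mat n n" "D \<in> carrier_mat n n"
    and "p < 2" "q < 2" "a < n" "b < n"
  shows "four_block_mat A B C D $$ (p * n + a, q * n + b) = sel (sel A B q) (sel C D q) p $$ (a,b)"
  using assms by (auto simp: less_2_cases_iff sel_def)

context
  fixes d :: nat and X Y :: "complex mat" and p q r s :: nat
  assumes X: "X \<in> carrier_mat d d" and Y: "Y \<in> carrier_mat d d"
    and pq: "p < 2" "q < 2" and rs: "r < d * d" "s < d * d"
begin

private lemma rs_div_mod_less: "r div d < d" "s div d < d" "r mod d < d" "s mod d < d"
proof -
  have "0 < d" using rs by (cases "d = 0") auto
  then show "r div d < d" "s div d < d" "r mod d < d" "s mod d < d"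
    using rs by (auto simp: less_mult_imp_div_less)
qed

lemma H1_index:
  "H1 d X Y $$ (p * (d * d) + r, q * (d * d) + s) =
     (if r = s then (\<Sum>i<d. \<Sum>k<d. cnj (sel (entries X) (entries Y) p k i) * sel (entries X) (entries Y) q k i)
      else 0)"
proof -
  have "p * (d * d) + r < 2 * (d * d)" "q * (d * d) + s < 2 * (d * d)"
    using pq rs by (auto simp: less_2_cases_iff)
  then show ?thesis
    using X Y pq rs
    unfolding H1_def index_kron[of _ "mat2 _ _ _ _" "1\<^sub>m (d * d)", simplified]
    by (auto simp: index_kron mat2_def block_index_div_mod[OF rs(1)] block_index_div_mod[OF rs(2)]
        mtrace_dag_mult fnorm2_def sel_def entries_def less_2_cases_iff)
qed

lemma H2_index:
  "H2 d X Y $$ (p * (d * d) + r, q * (d * d) + s) =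
     (if r mod d = s mod d
      then (\<Sum>k<d. cnj (sel (entries X) (entries Y) p k (r div d)) * sel (entries X) (entries Y) q k (s div d))
      else 0)"
proof -
  let ?F = "four_block_mat (dag X * X) (dag X * Y) (dag Y * X) (dag Y * Y)"
  have F: "?F \<in> carrier_mat (d + d) (d + d)" using X Y by (intro four_block_carrier_mat) auto
  have "p * (d * d) + r < (d + d) * d" "q * (d * d) + s < (d + d) * d"
    using pq rs by (auto simp: less_2_cases_iff algebra_simps)
  then have "H2 d X Y $$ (p * (d * d) + r, q * (d * d) + s)
      = ?F $$ (p * d + r div d, q * d + s div d) * (if r mod d = s mod d then 1 else 0)"
    unfolding H2_def using F rs rs_div_mod_less by (subst index_kron) (auto simp: block_index_div_mod)
  also have "?F $$ (p * d + r div d, q * d + s div d)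
      = sel (sel (dag X * X) (dag X * Y) q) (sel (dag Y * X) (dag Y * Y) q) p $$ (r div d, s div d)"
    using X Y pq rs_div_mod_less by (intro four_block_mat_index_sel) auto
  also have "\<dots> = (\<Sum>k<d. cnj (sel (entries X) (entries Y) p k (r div d)) * sel (entries X) (entries Y) q k (s div d))"
    using X Y pq rs_div_mod_less
    by (auto simp del: index_mult_mat simp: less_2_cases_iff sel_def entries_def
        index_mult_mat_sum[of _ d d _ d])
  finally show ?thesis by simp
qed

lemma H3_index:
  "H3 d X Y $$ (p * (d * d) + r, q * (d * d) + s) =
     (if r div d = s div d
      then (\<Sum>k<d. cnj (sel (entries X) (entries Y) p (r mod d) k) * sel (entries X) (entries Y) q (s mod d) k)
      else 0)"
proof -
  let ?K = "\<lambda>A B. kron (1\<^sub>m d) (conj_mat A * transpose_mat B)"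
  have K: "?K A B \<in> carrier_mat (d * d) (d * d)" if "A \<in> carrier_mat d d" "B \<in> carrier_mat d d" for A B
    using kron_carrier_mat[of "1\<^sub>m d" "conj_mat A * transpose_mat B"] that by simp
  have "H3 d X Y $$ (p * (d * d) + r, q * (d * d) + s)
      = sel (sel (?K X X) (?K X Y) q) (sel (?K Y X) (?K Y Y) q) p $$ (r, s)"
    unfolding H3_def using X Y pq rs K by (intro four_block_mat_index_sel) auto
  also have "\<dots> = (if r div d = s div d then 1 else 0)
      * sel (sel (conj_mat X * transpose_mat X) (conj_mat X * transpose_mat Y) q)
          (sel (conj_mat Y * transpose_mat X) (conj_mat Y * transpose_mat Y) q) p $$ (r mod d, s mod d)"
    using X Y pq rs rs_div_mod_less by (auto simp: less_2_cases_iff sel_def index_kron)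
  also have "\<dots> = (if r div d = s div d
      then (\<Sum>k<d. cnj (sel (entries X) (entries Y) p (r mod d) k) * sel (entries X) (entries Y) q (s mod d) k)
      else 0)"
    using X Y pq rs_div_mod_less
    by (auto simp del: index_mult_mat simp: less_2_cases_iff sel_def entries_def
        index_mult_mat_sum[of _ d d _ d])
  finally show ?thesis .
qed

lemma H4_index:
  "H4 X Y $$ (p * (d * d) + r, q * (d * d) + s) =
     cnj (sel (entries X) (entries Y) p (r mod d) (r div d)) * sel (entries X) (entries Y) q (s mod d) (s div d)"
proof -
  let ?K = "\<lambda>A B. conj_mat (vecm A) * transpose_mat (vecm B)"
  have K: "?K A B \<in> carrier_mat (d * d) (d * d)" if "A \<in> carrier_mat d d" "B \<in> carrier_mat d d" for A B
    using that by (auto simp: vecm_def conj_mat_def)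
  have e: "?K A B $$ (r, s) = cnj (A $$ (r mod d, r div d)) * B $$ (s mod d, s div d)"
    if "A \<in> carrier_mat d d" "B \<in> carrier_mat d d" for A B
    using that rs by (auto simp: vecm_def conj_mat_def scalar_prod_def)
  have "H4 X Y $$ (p * (d * d) + r, q * (d * d) + s)
      = sel (sel (?K X X) (?K X Y) q) (sel (?K Y X) (?K Y Y) q) p $$ (r, s)"
    unfolding H4_def using X Y pq rs K by (intro four_block_mat_index_sel) auto
  also have "\<dots> = cnj (sel (entries X) (entries Y) p (r mod d) (r div d))
      * sel (entries X) (entries Y) q (s mod d) (s div d)"
    using X Y pq by (auto simp: less_2_cases_iff sel_def entries_def e)
  finally show ?thesis .
qed

end

lemma H_parts_carrier_mat:
  assumes "X \<in> carrier_mat d d" "Y \<in> carrier_mat d d"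
  shows "H1 d X Y \<in> carrier_mat (2 * (d * d)) (2 * (d * d))"
    and "H2 d X Y \<in> carrier_mat (2 * (d * d)) (2 * (d * d))"
    and "H3 d X Y \<in> carrier_mat (2 * (d * d)) (2 * (d * d))"
    and "H4 X Y \<in> carrier_mat (2 * (d * d)) (2 * (d * d))"
  using assms
  by (auto simp: H1_def H2_def H3_def H4_def kron_def vecm_def mat2_def algebra_simps)

lemma HH_carrier_mat:
  assumes "X \<in> carrier_mat d d" "Y \<in> carrier_mat d d"
  shows "HH d X Y \<in> carrier_mat (2 * (d * d)) (2 * (d * d))"
  using H_parts_carrier_mat[OF assms] unfolding HH_def by simp

lemma HH_index:
  assumes X: "X \<in> carrier_mat d d" and Y: "Y \<in> carrier_mat d d"
    and "i < 2 * (d * d)" "j < 2 * (d * d)"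
  shows "HH d X Y $$ (i,j) = HH_fun d (entries X) (entries Y) i j"
proof -
  define p q r s where "p = i div (d * d)" "q = j div (d * d)" "r = i mod (d * d)" "s = j mod (d * d)"
  have pq: "p < 2" "q < 2" using assms by (auto simp: p_q_r_s_def less_mult_imp_div_less)
  have "0 < d * d" using assms(3) by (cases "d * d") auto
  then have rs: "r < d * d" "s < d * d" by (auto simp: p_q_r_s_def)
  have ij: "i = p * (d * d) + r" "j = q * (d * d) + s"
    using div_mult_mod_eq[of i "d * d"] div_mult_mod_eq[of j "d * d"] by (simp_all add: p_q_r_s_def)
  have "HH d X Y $$ (i,j)
      = H1 d X Y $$ (i,j) - 1/2 * (H2 d X Y $$ (i,j) + H3 d X Y $$ (i,j)) + 1/4 * H4 X Y $$ (i,j)"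
    using H_parts_carrier_mat[OF X Y] assms unfolding HH_def by simp
  also have "\<dots> = HH_coeff d (entries X) (entries Y) p q r s"
    unfolding ij H1_index[OF X Y pq rs] H2_index[OF X Y pq rs] H3_index[OF X Y pq rs]
      H4_index[OF X Y pq rs]
    by (simp only: HH_coeff_def)
  finally show ?thesis by (simp add: HH_fun_def p_q_r_s_def)
qed

lemma HH_coeff_cong:
  assumes "\<And>a b. a < d \<Longrightarrow> b < d \<Longrightarrow> x a b = x' a b" "\<And>a b. a < d \<Longrightarrow> b < d \<Longrightarrow> y a b = y' a b"
    and "r < d * d" "s < d * d"
  shows "HH_coeff d x y p q r s = HH_coeff d x' y' p q r s"
proof -
  have "0 < d" using assms(3) by (cases "d = 0") auto
  then have "r div d < d" "s div d < d" "r mod d < d" "s mod d < d"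
    using assms(3,4) by (auto simp: less_mult_imp_div_less)
  moreover have "sel x y p a b = sel x' y' p a b" if "a < d" "b < d" for p a b
    using assms(1,2) that by (simp add: sel_def)
  ultimately show ?thesis
    unfolding HH_coeff_def by (intro arg_cong2[where f = "(+)"] arg_cong2[where f = "(-)"]
        arg_cong2[where f = "(*)"] arg_cong2[where f = "(+)"] if_cong sum.cong refl) auto
qed

lemma HH_fun_cong:
  assumes "\<And>a b. a < d \<Longrightarrow> b < d \<Longrightarrow> x a b = x' a b" "\<And>a b. a < d \<Longrightarrow> b < d \<Longrightarrow> y a b = y' a b"
    and "0 < d"
  shows "HH_fun d x y i j = HH_fun d x' y' i j"
  unfolding HH_fun_def using assms by (intro HH_coeff_cong) auto

lemma HH_fun_hermitian: "HH_fun d x y j i = cnj (HH_fun d x y i j)"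
  unfolding HH_fun_def HH_coeff_def by (auto simp: mult.commute)

lemma continuous_on_if_const [continuous_intros]:
  "continuous_on S f \<Longrightarrow> continuous_on S (\<lambda>t. if c then f t else 0)"
  by (cases c) auto

lemma continuous_on_HH_fun:
  assumes "\<And>a b. continuous_on S (\<lambda>t. x t a b)" "\<And>a b. continuous_on S (\<lambda>t. y t a b)"
  shows "continuous_on S (\<lambda>t. HH_fun d (x t) (y t) i j)"
proof -
  have "continuous_on S (\<lambda>t. sel (x t) (y t) p a b)" for p a b
    using assms by (cases "p = 0") (auto simp: sel_def)
  then show ?thesis unfolding HH_fun_def HH_coeff_def by (intro continuous_intros)
qed

subsection \<open>Quadratic forms of continuous families of hermitian matrices\<close>

text \<open>
  Matrices and vectors are plain functions on \<open>nat\<close>, of which only the indices below \<open>n\<close>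
  matter; this makes the unit sphere a compact set in the product topology.
\<close>

definition sqnorm :: "nat \<Rightarrow> (nat \<Rightarrow> complex) \<Rightarrow> real" where
  "sqnorm n v = (\<Sum>i<n. (cmod (v i))\<^sup>2)"

definition sesq :: "nat \<Rightarrow> (nat \<Rightarrow> nat \<Rightarrow> complex) \<Rightarrow> (nat \<Rightarrow> complex) \<Rightarrow> (nat \<Rightarrow> complex) \<Rightarrow> complex"
  where "sesq n M a b = (\<Sum>i<n. \<Sum>j<n. cnj (a i) * M i j * b j)"

definition qform :: "nat \<Rightarrow> (nat \<Rightarrow> nat \<Rightarrow> complex) \<Rightarrow> (nat \<Rightarrow> complex) \<Rightarrow> complex" where
  "qform n M v = sesq n M v v"

definition hermitian_fun :: "nat \<Rightarrow> (nat \<Rightarrow> nat \<Rightarrow> complex) \<Rightarrow> bool" where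
  "hermitian_fun n M \<longleftrightarrow> (\<forall>i<n. \<forall>j<n. M j i = cnj (M i j))"

definition nonneg_form :: "nat \<Rightarrow> (nat \<Rightarrow> nat \<Rightarrow> complex) \<Rightarrow> bool" where
  "nonneg_form n M \<longleftrightarrow> (\<forall>v. 0 \<le> Re (qform n M v))"

definition kernel_trivial :: "nat \<Rightarrow> (nat \<Rightarrow> nat \<Rightarrow> complex) \<Rightarrow> bool" where
  "kernel_trivial n M \<longleftrightarrow> (\<forall>v. (\<forall>i<n. (\<Sum>j<n. M i j * v j) = 0) \<longrightarrow> (\<forall>i<n. v i = 0))"

lemma hermitian_fun_HH_fun: "hermitian_fun n (HH_fun d x y)"
  unfolding hermitian_fun_def by (intro allI impI HH_fun_hermitian)

lemma sqnorm_nonneg: "0 \<le> sqnorm n v"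
  unfolding sqnorm_def by (intro sum_nonneg) auto

lemma sqnorm_eq_0D: "sqnorm n v = 0 \<Longrightarrow> i < n \<Longrightarrow> v i = 0"
  unfolding sqnorm_def using sum_nonneg_eq_0_iff[of "{..<n}" "\<lambda>i. (cmod (v i))\<^sup>2"] by auto

lemma sqnorm_ge: "i < n \<Longrightarrow> (cmod (v i))\<^sup>2 \<le> sqnorm n v"
  unfolding sqnorm_def by (rule member_le_sum) auto

lemma sesq_swap:
  assumes "hermitian_fun n M"
  shows "sesq n M b a = cnj (sesq n M a b)"
proof -
  have "cnj (sesq n M a b) = (\<Sum>i<n. \<Sum>j<n. a i * cnj (M i j) * cnj (b j))"
    by (simp add: sesq_def)
  also have "\<dots> = (\<Sum>i<n. \<Sum>j<n. cnj (b j) * M j i * a i)"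
  proof (intro sum.cong refl)
    fix i j assume "i \<in> {..<n}" "j \<in> {..<n}"
    then have "M j i = cnj (M i j)" using assms unfolding hermitian_fun_def by blast
    then show "a i * cnj (M i j) * cnj (b j) = cnj (b j) * M j i * a i"
      by (simp add: mult.commute mult.left_commute)
  qed
  also have "\<dots> = sesq n M b a" unfolding sesq_def by (rule sum.swap)
  finally show ?thesis by simp
qed

lemma Im_qform_hermitian:
  assumes "hermitian_fun n M"
  shows "Im (qform n M v) = 0"
proof -
  have "cnj (qform n M v) = qform n M v"
    using sesq_swap[OF assms, of v v] unfolding qform_def by simp
  then have "Im (cnj (qform n M v)) = Im (qform n M v)" by simp
  then show ?thesis by simp
qed

lemma qform_add_smult:
  "qform n M (\<lambda>i. a i + c * b i)
     = qform n M a + c * sesq n M a b + cnj c * sesq n M b a + cnj c * c * qform n M b"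
proof -
  have "qform n M (\<lambda>i. a i + c * b i)
      = (\<Sum>i<n. \<Sum>j<n. cnj (a i) * M i j * a j + c * (cnj (a i) * M i j * b j)
          + cnj c * (cnj (b i) * M i j * a j) + cnj c * c * (cnj (b i) * M i j * b j))"
    unfolding qform_def sesq_def by (intro sum.cong refl) (simp add: algebra_simps)
  then show ?thesis
    unfolding qform_def sesq_def by (simp only: sum.distrib sum_distrib_left)
qed

lemma qform_smult: "qform n M (\<lambda>i. c * v i) = cnj c * c * qform n M v"
  unfolding qform_def sesq_def by (simp add: algebra_simps sum_distrib_left)

lemma qform_cong:
  "(\<And>i. i < n \<Longrightarrow> v i = w i) \<Longrightarrow> (\<And>i j. i < n \<Longrightarrow> j < n \<Longrightarrow> M i j = M' i j) \<Longrightarrow>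
   qform n M v = qform n M' w"
  unfolding qform_def sesq_def by (intro sum.cong refl) auto

lemma qform_add:
  fixes A B :: "nat \<Rightarrow> nat \<Rightarrow> complex"
  shows "qform n (\<lambda>i j. A i j + B i j) v = qform n A v + qform n B v"
  unfolding qform_def sesq_def by (simp add: algebra_simps sum.distrib)

text \<open>
  Expanding \<open>q(v - s M v) \<ge> 0\<close> gives \<open>0 \<le> -2 s \<parallel>M v\<parallel>\<^sup>2 + s\<^sup>2 q(M v)\<close> for all \<open>s > 0\<close>,
  which forces \<open>M v = 0\<close>.
\<close>
lemma kernel_if_qform_zero:
  assumes herm: "hermitian_fun n M" and nonneg: "nonneg_form n M" and zero: "Re (qform n M v) = 0"
  shows "\<forall>i<n. (\<Sum>j<n. M i j * v j) = 0"
proof -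
  define u where "u i = (\<Sum>j<n. M i j * v j)" for i
  define N where "N = sqnorm n u"
  have uv: "sesq n M u v = of_real N"
  proof -
    have "sesq n M u v = (\<Sum>i<n. cnj (u i) * u i)"
      unfolding sesq_def u_def by (simp add: sum_distrib_left mult.assoc)
    also have "\<dots> = (\<Sum>i<n. of_real ((cmod (u i))\<^sup>2))"
      by (intro sum.cong refl) (metis complex_norm_square mult.commute)
    finally show ?thesis by (simp add: sqnorm_def N_def)
  qed
  then have vu: "sesq n M v u = of_real N"
    using sesq_swap[OF herm, of v u] by simp
  have expand: "0 \<le> - 2 * s * N + s\<^sup>2 * Re (qform n M u)" for s :: real
  proof -
    have "qform n M (\<lambda>i. v i + of_real (-s) * u i)
        = qform n M v + of_real (-s) * sesq n M v u + cnj (of_real (-s)) * sesq n M u v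
          + cnj (of_real (-s)) * of_real (-s) * qform n M u"
      by (rule qform_add_smult)
    then have "Re (qform n M (\<lambda>i. v i + of_real (-s) * u i)) = - 2 * s * N + s\<^sup>2 * Re (qform n M u)"
      using zero by (simp add: uv vu power2_eq_square)
    then show ?thesis using nonneg unfolding nonneg_form_def by metis
  qed
  have "N = 0"
  proof (rule ccontr)
    assume "N \<noteq> 0"
    then have N: "N > 0" using sqnorm_nonneg[of n u] unfolding N_def by linarith
    define R where "R = \<bar>Re (qform n M u)\<bar>"
    define s where "s = N / (R + 1)"
    have s: "s > 0" using N by (simp add: s_def R_def add_pos_nonneg)
    have "s * R < N" using N by (simp add: s_def R_def field_simps)
    moreover have "s * Re (qform n M u) \<le> s * R"
      unfolding R_def using s by (intro mult_left_mono) auto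
    moreover have "s * (2 * N) \<le> s * (s * Re (qform n M u))"
      using expand[of s] by (simp add: power2_eq_square algebra_simps)
    then have "2 * N \<le> s * Re (qform n M u)" using s by simp
    ultimately show False using N by linarith
  qed
  then show ?thesis using sqnorm_eq_0D unfolding u_def N_def by blast
qed

lemma qform_diff_bound:
  "cmod (qform n A v - qform n B v) \<le> (\<Sum>i<n. \<Sum>j<n. cmod (A i j - B i j)) * sqnorm n v"
proof -
  have "qform n A v - qform n B v = (\<Sum>i<n. \<Sum>j<n. cnj (v i) * (A i j - B i j) * v j)"
    unfolding qform_def sesq_def by (simp add: algebra_simps sum_subtractf)
  also have "cmod \<dots> \<le> (\<Sum>i<n. \<Sum>j<n. cmod (cnj (v i) * (A i j - B i j) * v j))"
    by (rule order_trans[OF norm_sum sum_mono[OF norm_sum]])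
  also have "\<dots> = (\<Sum>i<n. \<Sum>j<n. cmod (A i j - B i j) * (cmod (v i) * cmod (v j)))"
    by (intro sum.cong refl) (simp add: norm_mult ac_simps)
  also have "\<dots> \<le> (\<Sum>i<n. \<Sum>j<n. cmod (A i j - B i j) * sqnorm n v)"
  proof (intro sum_mono mult_left_mono)
    fix i j assume "i \<in> {..<n}" "j \<in> {..<n}"
    then have "((cmod (v i))\<^sup>2 + (cmod (v j))\<^sup>2) / 2 \<le> sqnorm n v"
      using sqnorm_ge[of i n v] sqnorm_ge[of j n v] by simp
    then show "cmod (v i) * cmod (v j) \<le> sqnorm n v"
      using sum_squares_bound[of "cmod (v i)" "cmod (v j)"] by simp
  qed simp
  also have "\<dots> = (\<Sum>i<n. \<Sum>j<n. cmod (A i j - B i j)) * sqnorm n v"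
    by (simp add: sum_distrib_right)
  finally show ?thesis .
qed

definition unit_sphere_fun :: "nat \<Rightarrow> (nat \<Rightarrow> complex) set" where
  "unit_sphere_fun n = {v. (\<forall>i. v i \<in> (if i < n then cball 0 1 else {0})) \<and> sqnorm n v = 1}"

lemma continuous_on_coordinate: "continuous_on S (\<lambda>x :: nat \<Rightarrow> 'b :: topological_space. x i)"
  by (rule continuous_on_subset[OF continuous_on_product_coordinates]) simp

lemma continuous_on_sqnorm: "continuous_on S (sqnorm n)"
  unfolding sqnorm_def by (intro continuous_intros continuous_on_coordinate)

lemma continuous_on_qform: "continuous_on S (\<lambda>v. Re (qform n M v))"
  unfolding qform_def sesq_def by (intro continuous_intros continuous_on_coordinate)

lemma compact_unit_sphere_fun: "compact (unit_sphere_fun n)"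
proof -
  let ?K = "\<lambda>i. if i < n then cball 0 1 else {0 :: complex}"
  have "compactin (product_topology (\<lambda>_. euclidean) UNIV) (PiE UNIV ?K)"
    by (rule compactin_PiE[THEN iffD2]) (auto simp: compactin_euclidean_iff)
  then have "compact (PiE UNIV ?K)"
    by (simp only: euclidean_product_topology compactin_euclidean_iff)
  moreover have "closed {v. sqnorm n v = 1}"
    by (intro closed_Collect_eq continuous_on_sqnorm continuous_on_const)
  moreover have "unit_sphere_fun n = PiE UNIV ?K \<inter> {v. sqnorm n v = 1}"
    unfolding unit_sphere_fun_def PiE_def Pi_def extensional_def by blast
  ultimately show ?thesis by (simp add: compact_Int_closed)
qed

lemma qform_normalize:
  assumes "sqnorm n v > 0"
  shows "\<exists>w \<in> unit_sphere_fun n. Re (qform n M v) = sqnorm n v * Re (qform n M w)"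
proof -
  define N where "N = sqnorm n v"
  define s where "s = 1 / sqrt N"
  have N: "N > 0" and s: "s > 0" and s2: "s\<^sup>2 * N = 1"
    using assms by (simp_all add: N_def s_def power_divide)
  define w where "w i = (if i < n then of_real s * v i else 0)" for i
  have "w i \<in> (if i < n then cball 0 1 else {0})" for i
  proof (cases "i < n")
    case True
    have "cmod (v i) \<le> sqrt N" using sqnorm_ge[OF True] real_le_rsqrt unfolding N_def by blast
    then have "s * cmod (v i) \<le> 1" using N by (simp add: s_def field_simps)
    then show ?thesis using True s by (auto simp: w_def norm_mult)
  qed (simp add: w_def)
  moreover have "sqnorm n w = s\<^sup>2 * N"
    unfolding sqnorm_def w_def N_def using s
    by (simp add: norm_mult power_mult_distrib sum_distrib_left)
  moreover have "qform n M w = of_real (s\<^sup>2) * qform n M v"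
    using qform_cong[of n w "\<lambda>i. of_real s * v i" M M] by (simp add: w_def qform_smult power2_eq_square)
  ultimately show ?thesis
    using s2 by (intro bexI[of _ w]) (auto simp: unit_sphere_fun_def N_def[symmetric] field_simps)
qed

text \<open>The minimum of the form on the (compact) unit sphere is positive.\<close>
lemma nonneg_form_coercive:
  assumes herm: "hermitian_fun n M" and nonneg: "nonneg_form n M" and ker: "kernel_trivial n M"
  shows "\<exists>c>0. \<forall>v. c * sqnorm n v \<le> Re (qform n M v)"
proof (cases "n = 0")
  case True
  then show ?thesis by (intro exI[of _ 1]) (simp add: qform_def sesq_def sqnorm_def)
next
  case False
  define e :: "nat \<Rightarrow> complex" where "e i = (if i = 0 then 1 else 0)" for i
  have "sqnorm n e = (\<Sum>i<n. if i = 0 then 1 else 0)"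
    unfolding sqnorm_def e_def by (intro sum.cong refl) auto
  also have "\<dots> = 1" using False by (simp add: sum.delta)
  finally have "sqnorm n e = 1" .
  then have "e \<in> unit_sphere_fun n" using False by (auto simp: unit_sphere_fun_def e_def)
  then obtain v0 where v0: "v0 \<in> unit_sphere_fun n"
    and min: "\<And>w. w \<in> unit_sphere_fun n \<Longrightarrow> Re (qform n M v0) \<le> Re (qform n M w)"
    using continuous_attains_inf[OF compact_unit_sphere_fun, of n "\<lambda>v. Re (qform n M v)"]
      continuous_on_qform by blast
  define c where "c = Re (qform n M v0)"
  have "c > 0"
  proof (rule ccontr)
    assume "\<not> c > 0"
    then have "Re (qform n M v0) = 0" using nonneg unfolding nonneg_form_def c_def by (metis order.antisym not_less)
    then have "\<forall>i<n. v0 i = 0"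
      using kernel_if_qform_zero[OF herm nonneg] ker unfolding kernel_trivial_def by blast
    then have "sqnorm n v0 = 0" by (simp add: sqnorm_def)
    then show False using v0 by (simp add: unit_sphere_fun_def)
  qed
  moreover have "c * sqnorm n v \<le> Re (qform n M v)" for v
  proof (cases "sqnorm n v = 0")
    case True
    then show ?thesis
      using nonneg unfolding nonneg_form_def by simp
  next
    case False
    then obtain w where "w \<in> unit_sphere_fun n" "Re (qform n M v) = sqnorm n v * Re (qform n M w)"
      using qform_normalize sqnorm_nonneg[of n v] by (metis order_le_less)
    then show ?thesis
      using min[of w] sqnorm_nonneg[of n v] unfolding c_def by (simp add: mult.commute mult_left_mono)
  qed
  ultimately show ?thesis by blast
qed

lemma continuous_on_qform_family:
  assumes "\<And>i j. i < n \<Longrightarrow> j < n \<Longrightarrow> continuous_on S (\<lambda>t. M t i j)"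
  shows "continuous_on S (\<lambda>t. Re (qform n (M t) v))"
  unfolding qform_def sesq_def
  by (intro continuous_on_Re continuous_on_sum continuous_on_mult continuous_on_const assms) auto

lemma nonneg_form_if_nonneg_before:
  fixes M :: "real \<Rightarrow> nat \<Rightarrow> nat \<Rightarrow> complex"
  assumes cont: "\<And>i j. i < n \<Longrightarrow> j < n \<Longrightarrow> continuous_on {0..1} (\<lambda>t. M t i j)"
    and t0: "0 < t0" "t0 \<le> 1" and before: "\<And>t. t \<in> {0..<t0} \<Longrightarrow> nonneg_form n (M t)"
  shows "nonneg_form n (M t0)"
  unfolding nonneg_form_def
proof
  fix v
  have closure: "closure {0..<t0} = {0..t0}" using t0 by simp
  have "continuous_on (closure {0..<t0}) (\<lambda>t. Re (qform n (M t) v))"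
    unfolding closure
    by (rule continuous_on_subset[OF continuous_on_qform_family[OF cont]]) (use t0 in auto)
  then show "0 \<le> Re (qform n (M t0) v)"
    by (rule continuous_ge_on_closure) (use t0 before in \<open>auto simp: closure nonneg_form_def\<close>)
qed

text \<open>Nonsingularity makes the form coercive, and coercivity survives small perturbations.\<close>
lemma nonneg_form_near:
  fixes M :: "real \<Rightarrow> nat \<Rightarrow> nat \<Rightarrow> complex"
  assumes cont: "\<And>i j. i < n \<Longrightarrow> j < n \<Longrightarrow> continuous_on {0..1} (\<lambda>t. M t i j)"
    and t0: "t0 \<in> {0..1}" and herm: "hermitian_fun n (M t0)" and nonneg: "nonneg_form n (M t0)"
    and ker: "kernel_trivial n (M t0)"
  shows "\<exists>\<delta>>0. \<forall>t\<in>{0..1}. \<bar>t - t0\<bar> < \<delta> \<longrightarrow> nonneg_form n (M t)"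
proof -
  obtain c where "c > 0" and c: "\<And>v. c * sqnorm n v \<le> Re (qform n (M t0) v)"
    using nonneg_form_coercive[OF herm nonneg ker] by blast
  define E where "E t = (\<Sum>i<n. \<Sum>j<n. cmod (M t i j - M t0 i j))" for t
  have "continuous_on {0..1} E"
    unfolding E_def
    by (intro continuous_on_sum continuous_on_norm continuous_on_diff continuous_on_const cont) auto
  then have "\<forall>e>0. \<exists>\<delta>>0. \<forall>t\<in>{0..1}. dist t t0 < \<delta> \<longrightarrow> dist (E t) (E t0) < e"
    using t0 unfolding continuous_on_iff by blast
  then obtain \<delta> where "\<delta> > 0" and \<delta>: "\<forall>t\<in>{0..1}. dist t t0 < \<delta> \<longrightarrow> dist (E t) (E t0) < c"
    using \<open>c > 0\<close> by blast
  have "nonneg_form n (M t)" if t: "t \<in> {0..1}" "\<bar>t - t0\<bar> < \<delta>" for t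
    unfolding nonneg_form_def
  proof
    fix v
    have "\<bar>Re (qform n (M t) v) - Re (qform n (M t0) v)\<bar> \<le> E t * sqnorm n v"
      using abs_Re_le_cmod[of "qform n (M t) v - qform n (M t0) v"] qform_diff_bound[of n "M t" v "M t0"]
      unfolding E_def by simp
    moreover have "E t0 = 0" by (simp add: E_def)
    then have "E t \<le> c" using \<delta> t by (auto simp: dist_real_def)
    then have "E t * sqnorm n v \<le> c * sqnorm n v" by (simp add: mult_right_mono sqnorm_nonneg)
    ultimately show "0 \<le> Re (qform n (M t) v)" using c[of v] by linarith
  qed
  then show ?thesis using \<open>\<delta> > 0\<close> by blast
qed

text \<open>
  A continuous path of hermitian forms, nonsingular except possibly at its end and nonnegative at
  its start, stays nonnegative: at the infimum of the times with a negative value the form would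
  be nonnegative and nonsingular, hence nonnegative nearby.
\<close>
lemma nonneg_form_along_path:
  fixes M :: "real \<Rightarrow> nat \<Rightarrow> nat \<Rightarrow> complex"
  assumes cont: "\<And>i j. i < n \<Longrightarrow> j < n \<Longrightarrow> continuous_on {0..1} (\<lambda>t. M t i j)"
    and herm: "\<And>t. hermitian_fun n (M t)"
    and ker: "\<And>t. t \<in> {0..<1} \<Longrightarrow> kernel_trivial n (M t)"
    and start: "nonneg_form n (M 0)"
  shows "nonneg_form n (M 1)"
proof -
  define N where "N = {t \<in> {0..<1}. \<not> nonneg_form n (M t)}"
  have "N = {}"
  proof (rule ccontr)
    assume "N \<noteq> {}"
    have bdd: "bdd_below N" unfolding N_def by (rule bdd_belowI[of _ 0]) auto
    define t0 where "t0 = Inf N"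
    have below: "t0 \<le> t" if "t \<in> N" for t unfolding t0_def using bdd that by (intro cInf_lower)
    have "0 \<le> t0" unfolding t0_def using \<open>N \<noteq> {}\<close> by (intro cInf_greatest) (auto simp: N_def)
    obtain t' where "t' \<in> N" using \<open>N \<noteq> {}\<close> by blast
    then have "t0 < 1" using below[of t'] unfolding N_def by simp
    have before: "nonneg_form n (M t)" if "t \<in> {0..<t0}" for t
    proof (rule ccontr)
      assume "\<not> nonneg_form n (M t)"
      then have "t \<in> N" using that \<open>t0 < 1\<close> by (simp add: N_def)
      then show False using below[of t] that by simp
    qed
    have nonneg0: "nonneg_form n (M t0)"
    proof (cases "t0 = 0")
      case False
      show ?thesis
        by (rule nonneg_form_if_nonneg_before[OF cont])
          (use False \<open>0 \<le> t0\<close> \<open>t0 < 1\<close> before in simp_all)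
    qed (use start in simp)
    have "t0 \<in> {0..1}" "kernel_trivial n (M t0)" using \<open>0 \<le> t0\<close> \<open>t0 < 1\<close> ker by simp_all
    then obtain \<delta> where "\<delta> > 0" and near: "\<forall>t\<in>{0..1}. \<bar>t - t0\<bar> < \<delta> \<longrightarrow> nonneg_form n (M t)"
      using nonneg_form_near[OF cont _ herm nonneg0] by blast
    have "Inf N < t0 + \<delta>" using \<open>\<delta> > 0\<close> by (simp add: t0_def)
    then obtain t where t: "t \<in> N" "t < t0 + \<delta>"
      using cInf_less_iff[OF \<open>N \<noteq> {}\<close> bdd] by blast
    then have "t \<in> {0..1}" "\<bar>t - t0\<bar> < \<delta>" using below[of t] unfolding N_def by auto
    then show False using near t(1) unfolding N_def by blast
  qed
  show ?thesis
    by (rule nonneg_form_if_nonneg_before[OF cont]) (use \<open>N = {}\<close> in \<open>auto simp: N_def\<close>)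
qed

subsection \<open>The base pair \<open>(I, E\<^sub>0\<^sub>0)\<close>\<close>

definition kdelta :: "nat \<Rightarrow> nat \<Rightarrow> complex" where
  "kdelta a b = (if a = b then 1 else 0)"

definition unit00 :: "nat \<Rightarrow> nat \<Rightarrow> complex" where
  "unit00 a b = (if a = 0 \<and> b = 0 then 1 else 0)"

definition E00 :: "nat \<Rightarrow> complex mat" where
  "E00 d = Matrix.mat d d (\<lambda>(a,b). unit00 a b)"

lemma E00_carrier_mat: "E00 d \<in> carrier_mat d d"
  by (simp add: E00_def)

lemma index_E00: "a < d \<Longrightarrow> b < d \<Longrightarrow> E00 d $$ (a,b) = unit00 a b"
  by (simp add: E00_def)

lemma base_sel_real: "cnj (sel kdelta unit00 p a b) = sel kdelta unit00 p a b"
  by (simp add: sel_def kdelta_def unit00_def)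

lemma base_sel_sym: "sel kdelta unit00 p a b = sel kdelta unit00 p b a"
  by (auto simp: sel_def kdelta_def unit00_def)

lemma base_col_inner:
  assumes "a < d" "b < d" "p < 2" "q < 2"
  shows "(\<Sum>k<d. sel kdelta unit00 p k a * sel kdelta unit00 q k b) =
     (if a = b then (if p = 0 \<and> q = 0 then 1 else if a = 0 then 1 else 0) else 0)"
proof -
  define k0 where "k0 = (if p = 0 then a else 0)"
  define c :: complex where "c = (if a = b then (if p = 0 \<and> q = 0 then 1 else if a = 0 then 1 else 0) else 0)"
  have "sel kdelta unit00 p k a * sel kdelta unit00 q k b = (if k = k0 then c else 0)" for k
    using assms(3,4) unfolding less_2_cases_iff
    by (elim disjE) (auto simp: sel_def kdelta_def unit00_def k0_def c_def)
  moreover have "k0 < d" using assms by (auto simp: k0_def)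
  ultimately show ?thesis by (simp add: c_def)
qed

lemma base_row_inner:
  assumes "a < d" "b < d" "p < 2" "q < 2"
  shows "(\<Sum>k<d. sel kdelta unit00 p a k * sel kdelta unit00 q b k) =
     (if a = b then (if p = 0 \<and> q = 0 then 1 else if a = 0 then 1 else 0) else 0)"
  using base_col_inner[OF assms] base_sel_sym by simp

lemma base_trace_inner:
  assumes "0 < d" "p < 2" "q < 2"
  shows "(\<Sum>i<d. \<Sum>k<d. cnj (sel kdelta unit00 p k i) * sel kdelta unit00 q k i)
    = (if p = 0 \<and> q = 0 then of_nat d else 1)"
proof -
  have "(\<Sum>i<d. \<Sum>k<d. cnj (sel kdelta unit00 p k i) * sel kdelta unit00 q k i)
      = (\<Sum>i<d. if p = 0 \<and> q = 0 then 1 else if i = 0 then 1 else 0)"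
    using assms by (intro sum.cong refl) (simp add: base_sel_real base_col_inner)
  also have "\<dots> = (if p = 0 \<and> q = 0 then of_nat d else 1)" using assms by simp
  finally show ?thesis .
qed

definition base_diag :: "nat \<Rightarrow> nat \<Rightarrow> real" where
  "base_diag d r = 1 - (if r div d = 0 then 1/2 else 0) - (if r mod d = 0 then 1/2 else 0)"

definition base_vec :: "nat \<Rightarrow> nat \<Rightarrow> nat \<Rightarrow> real" where
  "base_vec d p r = (if p = 0 then (if r mod d = r div d then 1 else 0)
                     else (if r mod d = 0 \<and> r div d = 0 then 1 else 0))"

text \<open>
  \<open>H(I, E\<^sub>0\<^sub>0)\<close> is the sum of a matrix that is block diagonal after the permutation pairing
  index \<open>r\<close> with \<open>d\<^sup>2 + r\<close>, and the rank one matrix \<open>H\<^sub>4 / 4\<close>.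
\<close>
lemma HH_coeff_base:
  assumes "0 < d" "p < 2" "q < 2" "r < d * d" "s < d * d"
  shows "HH_coeff d kdelta unit00 p q r s
    = (if r = s then of_real (if p = 0 \<and> q = 0 then real d - 1 else base_diag d r) else 0)
      + of_real (1/4 * base_vec d p r * base_vec d q s)"
proof -
  have r: "r mod d < d" "r div d < d" "s mod d < d" "s div d < d"
    using assms by (auto simp: less_mult_imp_div_less)
  have rs: "r = s" if "r mod d = s mod d" "r div d = s div d"
    using that div_mult_mod_eq[of r d] div_mult_mod_eq[of s d] by metis
  have "sel kdelta unit00 p (r mod d) (r div d) = of_real (base_vec d p r)" for p r
    by (simp add: sel_def kdelta_def unit00_def base_vec_def)
  then show ?thesis
    using assms r rs
    unfolding HH_coeff_def base_sel_real base_trace_inner[OF assms(1-3)]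
    by (auto simp: base_col_inner base_row_inner base_diag_def)
qed

lemma sum_lessThan_double:
  fixes m :: nat
  shows "(\<Sum>i<2 * m. f i) = (\<Sum>r<m. f r + f (m + r))"
proof -
  have "i \<in> (\<lambda>r. m + r) ` {..<m}" if "i < 2 * m" "\<not> i < m" for i
    using that by (intro image_eqI[of _ _ "i - m"]) auto
  then have "{..<2 * m} = {..<m} \<union> (\<lambda>r. m + r) ` {..<m}" by auto
  then have "(\<Sum>i<2 * m. f i) = sum f ({..<m} \<union> (\<lambda>r. m + r) ` {..<m})" by simp
  also have "\<dots> = (\<Sum>i<m. f i) + (\<Sum>i\<in>(\<lambda>r. m + r) ` {..<m}. f i)"
    by (rule sum.union_disjoint) auto
  also have "(\<Sum>i\<in>(\<lambda>r. m + r) ` {..<m}. f i) = (\<Sum>r<m. f (m + r))"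
    by (subst sum.reindex) auto
  finally show ?thesis by (simp add: sum.distrib)
qed

lemma Re_two_by_two_form_nonneg:
  fixes x y :: complex and a k :: real
  assumes "0 \<le> k" "k \<le> a"
  shows "0 \<le> Re (cnj x * a * x + cnj x * k * y + cnj y * k * x + cnj y * k * y)"
proof -
  have "Re (cnj x * a * x + cnj x * k * y + cnj y * k * x + cnj y * k * y)
      = k * ((Re x + Re y)\<^sup>2 + (Im x + Im y)\<^sup>2) + (a - k) * ((Re x)\<^sup>2 + (Im x)\<^sup>2)"
    by (simp add: power2_eq_square algebra_simps)
  then show ?thesis using assms by simp
qed

lemma qform_rank_one_nonneg:
  fixes w :: "nat \<Rightarrow> real"
  assumes "0 \<le> c"
  shows "0 \<le> Re (qform n (\<lambda>i j. of_real (c * w i * w j)) v)"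
proof -
  define S where "S = (\<Sum>j<n. of_real (w j) * v j)"
  have "qform n (\<lambda>i j. of_real (c * w i * w j)) v = of_real c * (cnj S * S)"
    unfolding S_def qform_def sesq_def by (simp add: sum_product sum_distrib_left algebra_simps)
  also have "Re \<dots> = c * (cmod S)\<^sup>2" by (simp add: complex_norm_square[symmetric] mult.commute)
  finally show ?thesis using assms by simp
qed

lemma qform_two_block_diag_nonneg:
  fixes k :: "nat \<Rightarrow> real"
  assumes "\<And>r. 0 \<le> k r" "\<And>r. k r \<le> a"
  shows "0 \<le> Re (qform (2 * m)
    (\<lambda>i j. if i mod m = j mod m then of_real (if i div m = 0 \<and> j div m = 0 then a else k (i mod m)) else 0) v)"
    (is "0 \<le> Re (qform _ ?A v)")
proof -
  define F where "F i j = cnj (v i)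
    * (if i mod m = j mod m then of_real (if i div m = 0 \<and> j div m = 0 then a else k (i mod m)) else 0)
    * v j" for i j
  define c where "c r = cnj (v r) * a * v r + cnj (v r) * k r * v (m + r)
    + cnj (v (m + r)) * k r * v r + cnj (v (m + r)) * k r * v (m + r)" for r
  have block: "F r s + F r (m + s) + F (m + r) s + F (m + r) (m + s) = (if s = r then c r else 0)"
    if "r < m" "s < m" for r s
    using that by (auto simp: F_def c_def)
  have "qform (2 * m) ?A v = (\<Sum>r<m. \<Sum>s<m. F r s + F r (m + s) + F (m + r) s + F (m + r) (m + s))"
    unfolding qform_def sesq_def F_def[symmetric] sum_lessThan_double by (simp add: sum.distrib)
  also have "\<dots> = (\<Sum>r<m. c r)" by (simp add: block)
  moreover have "0 \<le> Re (c r)" for r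
    unfolding c_def by (intro Re_two_by_two_form_nonneg assms)
  ultimately show ?thesis by (simp add: Re_sum sum_nonneg)
qed

lemma nonneg_form_HH_base:
  assumes "2 \<le> d"
  shows "nonneg_form (2 * (d * d)) (HH_fun d (entries (1\<^sub>m d)) (entries (E00 d)))"
  unfolding nonneg_form_def
proof
  fix v
  define m where "m = d * d"
  have "0 < d" using assms by simp
  define A :: "nat \<Rightarrow> nat \<Rightarrow> complex" where "A i j = (if i mod m = j mod m
    then of_real (if i div m = 0 \<and> j div m = 0 then real d - 1 else base_diag d (i mod m)) else 0)"
    for i j
  define B :: "nat \<Rightarrow> nat \<Rightarrow> complex" where "B i j = of_real (1/4 * base_vec d (i div m) (i mod m) * base_vec d (j div m) (j mod m))"
    for i j
  have "HH_fun d (entries (1\<^sub>m d)) (entries (E00 d)) i j = A i j + B i j"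
    if "i < 2 * m" "j < 2 * m" for i j
  proof -
    have "HH_fun d (entries (1\<^sub>m d)) (entries (E00 d)) i j = HH_fun d kdelta unit00 i j"
      using \<open>0 < d\<close> by (intro HH_fun_cong) (simp_all add: entries_def kdelta_def index_E00)
    moreover have "i div m < 2" "j div m < 2" "i mod m < d * d" "j mod m < d * d"
      using that \<open>0 < d\<close> by (auto simp: less_mult_imp_div_less m_def)
    ultimately show ?thesis
      unfolding HH_fun_def A_def B_def m_def by (simp add: HH_coeff_base[OF \<open>0 < d\<close>])
  qed
  then have "qform (2 * m) (HH_fun d (entries (1\<^sub>m d)) (entries (E00 d))) v = qform (2 * m) A v + qform (2 * m) B v"
    by (simp add: qform_add[symmetric] cong: qform_cong)
  moreover have "0 \<le> Re (qform (2 * m) A v)"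
    unfolding A_def using assms
    by (intro qform_two_block_diag_nonneg) (auto simp: base_diag_def)
  moreover have "0 \<le> Re (qform (2 * m) B v)"
    unfolding B_def by (intro qform_rank_one_nonneg) simp
  ultimately show "0 \<le> Re (qform (2 * (d * d)) (HH_fun d (entries (1\<^sub>m d)) (entries (E00 d))) v)"
    by (simp add: m_def)
qed

subsection \<open>Generic pairs along a pencil\<close>

definition segment_mat :: "complex mat \<Rightarrow> complex mat \<Rightarrow> complex \<Rightarrow> complex mat" where
  "segment_mat A B w = (1 - w) \<cdot>\<^sub>m A + w \<cdot>\<^sub>m B"

lemma segment_mat_carrier_mat:
  "B \<in> carrier_mat d d \<Longrightarrow> segment_mat A B w \<in> carrier_mat d d"
  by (simp add: segment_mat_def)

lemma index_segment_mat:
  "A \<in> carrier_mat d d \<Longrightarrow> B \<in> carrier_mat d d \<Longrightarrow> a < d \<Longrightarrow> b < d \<Longrightarrow>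
   segment_mat A B w $$ (a,b) = (1 - w) * A $$ (a,b) + w * B $$ (a,b)"
  by (simp add: segment_mat_def)

lemma segment_mat_0: "A \<in> carrier_mat d d \<Longrightarrow> B \<in> carrier_mat d d \<Longrightarrow> segment_mat A B 0 = A"
  by (rule eq_matI) (auto simp: segment_mat_def)

lemma segment_mat_1: "A \<in> carrier_mat d d \<Longrightarrow> B \<in> carrier_mat d d \<Longrightarrow> segment_mat A B 1 = B"
  by (rule eq_matI) (auto simp: segment_mat_def)

lemma continuous_on_HH_fun_segment:
  assumes "A \<in> carrier_mat d d" "B \<in> carrier_mat d d" "A' \<in> carrier_mat d d" "B' \<in> carrier_mat d d"
    and "0 < d" and z: "continuous_on S z"
  shows "continuous_on S
    (\<lambda>t. HH_fun d (entries (segment_mat A B (z t))) (entries (segment_mat A' B' (z t))) i j)"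
proof -
  have "HH_fun d (entries (segment_mat A B (z t))) (entries (segment_mat A' B' (z t))) i j
      = HH_fun d (\<lambda>a b. (1 - z t) * A $$ (a,b) + z t * B $$ (a,b))
          (\<lambda>a b. (1 - z t) * A' $$ (a,b) + z t * B' $$ (a,b)) i j" for t
    using assms by (intro HH_fun_cong) (simp_all add: entries_def index_segment_mat)
  moreover have "continuous_on S (\<lambda>t. HH_fun d (\<lambda>a b. (1 - z t) * A $$ (a,b) + z t * B $$ (a,b))
          (\<lambda>a b. (1 - z t) * A' $$ (a,b) + z t * B' $$ (a,b)) i j)"
    by (intro continuous_on_HH_fun continuous_intros z)
  ultimately show ?thesis by simp
qed

lemma finite_singular_segment_one:
  assumes X: "X \<in> carrier_mat d d"
  shows "finite {w. det (segment_mat (1\<^sub>m d) X w) = 0}"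
proof -
  have cp: "char_poly X \<noteq> 0" using degree_monic_char_poly[OF X] by auto
  have "{w. det (segment_mat (1\<^sub>m d) X w) = 0} \<subseteq> (\<lambda>\<rho>. 1 / (1 - \<rho>)) ` {\<rho>. poly (char_poly X) \<rho> = 0}"
  proof
    fix w assume w: "w \<in> {w. det (segment_mat (1\<^sub>m d) X w) = 0}"
    then have "w \<noteq> 0" using segment_mat_0[OF one_carrier_mat X] by auto
    define \<rho> where "\<rho> = (w - 1) / w"
    have "segment_mat (1\<^sub>m d) X w = w \<cdot>\<^sub>m char_matrix X \<rho>"
      by (rule eq_matI) (use X \<open>w \<noteq> 0\<close> in \<open>auto simp: segment_mat_def char_matrix_def \<rho>_def field_simps\<close>)
    moreover have "char_matrix X \<rho> \<in> carrier_mat d d" using char_matrix_closed[OF X] .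
    ultimately have "det (segment_mat (1\<^sub>m d) X w) = w ^ d * det (char_matrix X \<rho>)" by simp
    then have "det (- char_matrix X \<rho>) = 0"
      using w \<open>w \<noteq> 0\<close> det_0_negate[of "char_matrix X \<rho>" d] X by simp
    then have "poly (char_poly X) \<rho> = 0" using char_poly_matrix[OF X] by simp
    moreover have "w = 1 / (1 - \<rho>)" using \<open>w \<noteq> 0\<close> by (simp add: \<rho>_def field_simps)
    ultimately show "w \<in> (\<lambda>\<rho>. 1 / (1 - \<rho>)) ` {\<rho>. poly (char_poly X) \<rho> = 0}" by blast
  qed
  then show ?thesis using finite_subset poly_roots_finite[OF cp] by blast
qed

definition diag_minor :: "complex mat \<Rightarrow> complex mat \<Rightarrow> complex" where
  "diag_minor A B = A $$ (0,0) * B $$ (1,1) - A $$ (1,1) * B $$ (0,0)"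

text \<open>The diagonal entries \<open>0\<close> and \<open>1\<close> of \<open>a A + b B = 0\<close> form a \<open>2 \<times> 2\<close> system of determinant \<open>diag_minor A B\<close>.\<close>
lemma generic_pair_if_det_diag_minor:
  assumes A: "A \<in> carrier_mat d d" and B: "B \<in> carrier_mat d d" and "2 \<le> d"
    and det: "det A \<noteq> 0" and minor: "diag_minor A B \<noteq> 0"
  shows "generic_pair A B"
  unfolding generic_pair_def
proof (intro conjI allI impI)
  fix a b :: complex
  assume zero: "a \<cdot>\<^sub>m A + b \<cdot>\<^sub>m B = 0\<^sub>m (dim_row A) (dim_col A)"
  have "a * A $$ (k,k) + b * B $$ (k,k) = 0" if "k < d" for k
  proof -
    have "(a \<cdot>\<^sub>m A + b \<cdot>\<^sub>m B) $$ (k,k) = 0" using zero A that by simp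
    then show ?thesis using A B that by simp
  qed
  then have e0: "a * A $$ (0,0) + b * B $$ (0,0) = 0" and e1: "a * A $$ (1,1) + b * B $$ (1,1) = 0"
    using \<open>2 \<le> d\<close> by simp_all
  have "a * diag_minor A B = B $$ (1,1) * (a * A $$ (0,0) + b * B $$ (0,0))
      - B $$ (0,0) * (a * A $$ (1,1) + b * B $$ (1,1))"
    by (simp add: diag_minor_def algebra_simps)
  then show "a = 0" using e0 e1 minor by simp
  have "b * diag_minor A B = A $$ (0,0) * (a * A $$ (1,1) + b * B $$ (1,1))
      - A $$ (1,1) * (a * A $$ (0,0) + b * B $$ (0,0))"
    by (simp add: diag_minor_def algebra_simps)
  then show "b = 0" using e0 e1 minor by simp
next
  have "1 \<cdot>\<^sub>m A + 0 \<cdot>\<^sub>m B = A" by (rule eq_matI) (use A B in auto)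
  then show "\<exists>a b. det (a \<cdot>\<^sub>m A + b \<cdot>\<^sub>m B) \<noteq> 0" using det by metis
qed

lemma generic_segment_cofinite:
  assumes X: "X \<in> carrier_mat d d" and Y: "Y \<in> carrier_mat d d" and "2 \<le> d"
  obtains B where "finite B" "0 \<notin> B"
    "\<And>w. w \<notin> B \<Longrightarrow> generic_pair (segment_mat (1\<^sub>m d) X w) (segment_mat (E00 d) Y w)"
proof
  have E: "E00 d \<in> carrier_mat d d" by (rule E00_carrier_mat)
  have "0 < d" "1 < d" using \<open>2 \<le> d\<close> by simp_all
  define P where "P = [:1, X $$ (0,0) - 1:] * [:0, Y $$ (1,1):] - [:1, X $$ (1,1) - 1:] * [:1, Y $$ (0,0) - 1:]"
  have minor: "diag_minor (segment_mat (1\<^sub>m d) X w) (segment_mat (E00 d) Y w) = poly P w" for w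
    using \<open>0 < d\<close> \<open>1 < d\<close>
    by (simp add: diag_minor_def index_segment_mat[OF one_carrier_mat X]
        index_segment_mat[OF E Y] index_E00 unit00_def P_def algebra_simps)
  have "poly P 0 = -1" by (simp add: P_def)
  then have "P \<noteq> 0" by auto
  let ?B = "{w. det (segment_mat (1\<^sub>m d) X w) = 0} \<union> {w. poly P w = 0}"
  show "finite ?B" using finite_singular_segment_one[OF X] poly_roots_finite[OF \<open>P \<noteq> 0\<close>] by simp
  show "0 \<notin> ?B" using segment_mat_0[OF one_carrier_mat X] \<open>poly P 0 = -1\<close> by simp
  show "generic_pair (segment_mat (1\<^sub>m d) X w) (segment_mat (E00 d) Y w)" if "w \<notin> ?B" for w
    using that minor \<open>2 \<le> d\<close>
    by (intro generic_pair_if_det_diag_minor[OF segment_mat_carrier_mat[OF X] segment_mat_carrier_mat[OF Y]])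
      auto
qed

text \<open>
  On \<open>0 < t < 1\<close> the path \<open>z t = t + i s t (1 - t)\<close> satisfies \<open>Im z / (Re z (1 - Re z)) = s\<close>,
  and \<open>s\<close> is chosen outside the finitely many values of this ratio on \<open>B\<close>.
\<close>
lemma path_avoiding_finite:
  fixes B :: "complex set"
  assumes "finite B" "0 \<notin> B"
  obtains z :: "real \<Rightarrow> complex" where "continuous_on {0..1} z" "z 0 = 0" "z 1 = 1" "\<And>t. t \<in> {0..<1} \<Longrightarrow> z t \<notin> B"
proof -
  obtain s :: real where s: "s \<notin> (\<lambda>b. Im b / (Re b * (1 - Re b))) ` B"
    using ex_new_if_finite[OF infinite_UNIV_char_0 finite_imageI[OF \<open>finite B\<close>]] by blast
  define z where "z t = complex_of_real t + \<i> * complex_of_real (s * t * (1 - t))" for t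
  show ?thesis
  proof (rule that[of z])
  show "continuous_on {0..1} z" unfolding z_def by (intro continuous_intros)
  show "z 0 = 0" "z 1 = 1" by (simp_all add: z_def)
  show "z t \<notin> B" if "t \<in> {0..<1}" for t
  proof (cases "t = 0")
    case False
    then have "Im (z t) / (Re (z t) * (1 - Re (z t))) = s" using that by (simp add: z_def)
    then show ?thesis using s by force
  qed (use \<open>0 \<notin> B\<close> in \<open>simp add: z_def\<close>)
  qed
qed

subsection \<open>From the entry formula back to \<open>H(X, Y)\<close>\<close>

lemma kernel_trivial_if_det_nonzero:
  assumes A: "A \<in> carrier_mat n n" and "det A \<noteq> 0"
  shows "kernel_trivial n (\<lambda>i j. A $$ (i,j))"
  unfolding kernel_trivial_def
proof (rule allI, rule impI)
  fix v assume h: "\<forall>i<n. (\<Sum>j<n. A $$ (i,j) * v j) = 0"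
  have "(A *\<^sub>v Matrix.vec n v) $ i = 0" if "i < n" for i
    using A h that by (simp add: scalar_prod_def atLeast0LessThan)
  then have "A *\<^sub>v Matrix.vec n v = 0\<^sub>v n"
    using A by (intro eq_vecI) auto
  then have "Matrix.vec n v = 0\<^sub>v n"
    using det_0_iff_vec_prod_zero[OF A] \<open>det A \<noteq> 0\<close> vec_carrier by blast
  then show "\<forall>i<n. v i = 0" by (metis index_vec index_zero_vec(1))
qed

lemma kernel_trivial_HH_fun:
  assumes X: "X \<in> carrier_mat d d" and Y: "Y \<in> carrier_mat d d" and "det (HH d X Y) \<noteq> 0"
  shows "kernel_trivial (2 * (d * d)) (HH_fun d (entries X) (entries Y))"
proof -
  have "(\<Sum>j<2 * (d * d). HH_fun d (entries X) (entries Y) i j * v j)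
      = (\<Sum>j<2 * (d * d). HH d X Y $$ (i,j) * v j)" if "i < 2 * (d * d)" for i v
    using that by (intro sum.cong refl) (simp add: HH_index[OF X Y])
  then show ?thesis
    using kernel_trivial_if_det_nonzero[OF HH_carrier_mat[OF X Y] assms(3)]
    unfolding kernel_trivial_def by simp
qed

lemma psd_HH_if_nonneg_form:
  assumes X: "X \<in> carrier_mat d d" and Y: "Y \<in> carrier_mat d d"
    and nonneg: "nonneg_form (2 * (d * d)) (HH_fun d (entries X) (entries Y))"
  shows "psd (HH d X Y)"
proof -
  define n where "n = 2 * (d * d)"
  have car: "HH d X Y \<in> carrier_mat n n" unfolding n_def by (rule HH_carrier_mat[OF X Y])
  have ent: "HH d X Y $$ (i,j) = HH_fun d (entries X) (entries Y) i j" if "i < n" "j < n" for i j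
    using HH_index[OF X Y] that by (simp add: n_def)
  have "dag (HH d X Y) = HH d X Y"
  proof (rule eq_matI)
    fix i j assume "i < dim_row (HH d X Y)" "j < dim_col (HH d X Y)"
    then have ij: "i < n" "j < n" using car by auto
    then have "dag (HH d X Y) $$ (i,j) = cnj (HH_fun d (entries X) (entries Y) j i)"
      using car ent by simp
    also have "\<dots> = HH d X Y $$ (i,j)"
      using ent[OF ij] HH_fun_hermitian[of d "entries X" "entries Y" i j] by simp
    finally show "dag (HH d X Y) $$ (i,j) = HH d X Y $$ (i,j)" .
  qed (use car in auto)
  moreover have "(\<Sum>i<n. cnj (v $ i) * (HH d X Y *\<^sub>v v) $ i) = qform n (HH_fun d (entries X) (entries Y)) (\<lambda>i. v $ i)"
    if "v \<in> carrier_vec n" for v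
    unfolding qform_def sesq_def
  proof (intro sum.cong refl)
    fix i assume "i \<in> {..<n}"
    then have "(HH d X Y *\<^sub>v v) $ i = (\<Sum>j<n. HH_fun d (entries X) (entries Y) i j * v $ j)"
      using car that ent by (auto simp: scalar_prod_def atLeast0LessThan intro!: sum.cong)
    then show "cnj (v $ i) * (HH d X Y *\<^sub>v v) $ i
        = (\<Sum>j<n. cnj (v $ i) * HH_fun d (entries X) (entries Y) i j * v $ j)"
      by (simp add: sum_distrib_left mult.assoc)
  qed
  moreover have "hermitian_fun n (HH_fun d (entries X) (entries Y))"
    by (rule hermitian_fun_HH_fun)
  ultimately show ?thesis
    using car nonneg Im_qform_hermitian unfolding psd_def Let_def nonneg_form_def n_def by auto
qed

theorem proposition6p2:
  fixes d :: nat
  assumes "d \<ge> 3"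
    and "\<forall>X \<in> carrier_mat d d. \<forall>Y \<in> carrier_mat d d. generic_pair X Y \<longrightarrow> det (HH d X Y) \<noteq> 0"
  shows "\<forall>X \<in> carrier_mat d d. \<forall>Y \<in> carrier_mat d d. psd (HH d X Y)"
proof (intro ballI)
  fix X Y :: "complex mat" assume X: "X \<in> carrier_mat d d" and Y: "Y \<in> carrier_mat d d"
  have "2 \<le> d" using assms(1) by simp
  have E: "E00 d \<in> carrier_mat d d" by (rule E00_carrier_mat)
  let ?X = "segment_mat (1\<^sub>m d) X" and ?Y = "segment_mat (E00 d) Y"
  obtain B where "finite B" "0 \<notin> B" and generic: "\<And>w. w \<notin> B \<Longrightarrow> generic_pair (?X w) (?Y w)"
    using generic_segment_cofinite[OF X Y \<open>2 \<le> d\<close>] by metis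
  obtain z :: "real \<Rightarrow> complex" where z: "continuous_on {0..1} z" "z 0 = 0" "z 1 = 1" "\<And>t. t \<in> {0..<1} \<Longrightarrow> z t \<notin> B"
    using path_avoiding_finite[OF \<open>finite B\<close> \<open>0 \<notin> B\<close>] by metis
  define M where "M t = HH_fun d (entries (?X (z t))) (entries (?Y (z t)))" for t
  have "nonneg_form (2 * (d * d)) (M 1)"
  proof (rule nonneg_form_along_path)
    show "continuous_on {0..1} (\<lambda>t. M t i j)" for i j
      unfolding M_def using X Y E \<open>2 \<le> d\<close> by (intro continuous_on_HH_fun_segment z(1)) auto
    show "hermitian_fun (2 * (d * d)) (M t)" for t
      unfolding M_def by (rule hermitian_fun_HH_fun)
    show "kernel_trivial (2 * (d * d)) (M t)" if "t \<in> {0..<1}" for t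
    proof -
      have "?X (z t) \<in> carrier_mat d d" "?Y (z t) \<in> carrier_mat d d"
        using X Y by (simp_all add: segment_mat_carrier_mat)
      moreover have "det (HH d (?X (z t)) (?Y (z t))) \<noteq> 0"
        by (rule assms(2)[rule_format, OF calculation generic[OF z(4)[OF that]]])
      ultimately show ?thesis unfolding M_def by (rule kernel_trivial_HH_fun)
    qed
    show "nonneg_form (2 * (d * d)) (M 0)"
      unfolding M_def z(2) segment_mat_0[OF one_carrier_mat X] segment_mat_0[OF E Y]
      using nonneg_form_HH_base[OF \<open>2 \<le> d\<close>] .
  qed
  then show "psd (HH d X Y)"
    unfolding M_def z(3) segment_mat_1[OF one_carrier_mat X] segment_mat_1[OF E Y]
    by (rule psd_HH_if_nonneg_form[OF X Y])
qed

end
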